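(* For $\xi = (\tau_L,\delta_L,\tau_R,\delta_R) \in \mathbb{R}^4$ let $f_\xi:\mathbb{R}^2\to\mathbb{R}^2$ be $$f_\xi(x,y) = \begin{cases} (\tau_L x + y + 1,\ -\delta_L x), & x \le 0,\\ (\tau_R x + y + 1,\ -\delta_R x), & x \ge 0.\end{cases}$$ Let $\Phi = \{\xi \in \mathbb{R}^4 : \tau_L > |\delta_L + 1|,\ \tau_R < -|\delta_R+1|\}$, $\alpha(\xi) = \tau_L\tau_R + (\delta_L - 1)(\delta_R - 1)$, and $\mathcal{P}_2 = \{\xi \in \Phi : \delta_L\delta_R < 1,\ \alpha(\xi) > 0\}$. If $\xi \in \mathcal{P}_2$, then $f_\xi$ has an asymptotically stable $LR$-cycle, i.e. an asymptotically stable period-two orbit $\{P,Q\}$ with $P$ in the left half-plane $x<0$ and $Q$ in the right half-plane $x>0$. *)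

theory Defs
  imports "HOL-Analysis.Analysis"
begin

text \<open>The two-piece border-collision normal form map in R^2 (points as real \<times> real).
  The two formulas agree on x = 0.\<close>
definition bcnf :: "real \<Rightarrow> real \<Rightarrow> real \<Rightarrow> real \<Rightarrow> real \<times> real \<Rightarrow> real \<times> real" where
  "bcnf tauL deltaL tauR deltaR p =
     (let x = fst p; y = snd p in
      if x \<le> 0 then (tauL * x + y + 1, - deltaL * x)
      else (tauR * x + y + 1, - deltaR * x))"

definition Phi_region :: "real \<Rightarrow> real \<Rightarrow> real \<Rightarrow> real \<Rightarrow> bool" where
  "Phi_region tauL deltaL tauR deltaR \<longleftrightarrow>
     tauL > \<bar>deltaL + 1\<bar> \<and> tauR < - \<bar>deltaR + 1\<bar>"

definition alpha_fn :: "real \<Rightarrow> real \<Rightarrow> real \<Rightarrow> real \<Rightarrow> real" where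
  "alpha_fn tauL deltaL tauR deltaR = tauL * tauR + (deltaL - 1) * (deltaR - 1)"

definition P2_region :: "real \<Rightarrow> real \<Rightarrow> real \<Rightarrow> real \<Rightarrow> bool" where
  "P2_region tauL deltaL tauR deltaR \<longleftrightarrow>
     Phi_region tauL deltaL tauR deltaR \<and> deltaL * deltaR < 1 \<and>
     alpha_fn tauL deltaL tauR deltaR > 0"

definition lyapunov_stable_set :: "('a::metric_space \<Rightarrow> 'a) \<Rightarrow> 'a set \<Rightarrow> bool" where
  "lyapunov_stable_set f \<Gamma> \<longleftrightarrow>
     (\<forall>e>0. \<exists>d>0. \<forall>z. infdist z \<Gamma> < d \<longrightarrow> (\<forall>n. infdist ((f ^^ n) z) \<Gamma> < e))"

definition attracting_set :: "('a::metric_space \<Rightarrow> 'a) \<Rightarrow> 'a set \<Rightarrow> bool" where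
  "attracting_set f \<Gamma> \<longleftrightarrow>
     (\<exists>d>0. \<forall>z. infdist z \<Gamma> < d \<longrightarrow> ((\<lambda>n. infdist ((f ^^ n) z) \<Gamma>) \<longlonglongrightarrow> 0))"

definition asymptotically_stable_set :: "('a::metric_space \<Rightarrow> 'a) \<Rightarrow> 'a set \<Rightarrow> bool" where
  "asymptotically_stable_set f \<Gamma> \<longleftrightarrow> lyapunov_stable_set f \<Gamma> \<and> attracting_set f \<Gamma>"

definition has_stable_LR_cycle :: "(real \<times> real \<Rightarrow> real \<times> real) \<Rightarrow> bool" where
  "has_stable_LR_cycle f \<longleftrightarrow>
     (\<exists>P Q. fst P < 0 \<and> fst Q > 0 \<and> f P = Q \<and> f Q = P \<and>
            asymptotically_stable_set f {P, Q})"

end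

theory Submission
  imports Defs
begin

(* The LR-cycle {P, Q} solves the affine equations f_L P = Q, f_R Q = P and lies off the
   switching line, so near P and Q the map is affine with linear parts A_L and A_R, and near P
   the second iterate is z |-> P + A_R A_L (z - P).  The product A_R A_L has trace
   tauL tauR - deltaL - deltaR and determinant deltaL deltaR, and the inequalities defining P2
   are exactly the Jury conditions |trace| < 1 + det, det < 1.  Under them a positive definite
   quadratic form in two consecutive terms is a strict Lyapunov function for the recurrence
   u (k + 2) = trace u (k + 1) - det u k, so the powers of A_R A_L decay geometrically.  Hence
   the even iterates near P, and with them the odd iterates near Q, converge geometrically to
   the orbit, which gives both Lyapunov stability and attraction. *)

definition qform :: "real \<Rightarrow> real \<Rightarrow> real \<Rightarrow> real \<Rightarrow> real" where
  "qform p q x y = x\<^sup>2 + p * x * y + q * y\<^sup>2"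

lemma qform_ge:
  assumes "p\<^sup>2 < 4 * q"
  shows "(q - p\<^sup>2 / 4) * y\<^sup>2 \<le> qform p q x y"
proof -
  have "qform p q x y = (x + p * y / 2)\<^sup>2 + (q - p\<^sup>2 / 4) * y\<^sup>2"
    unfolding qform_def by (simp add: power2_eq_square algebra_simps)
  then show ?thesis by simp
qed

lemma qform_le: "qform p q x y \<le> (1 + \<bar>p\<bar> + \<bar>q\<bar>) * (x\<^sup>2 + y\<^sup>2)"
proof -
  have "2 * \<bar>x * y\<bar> \<le> x\<^sup>2 + y\<^sup>2"
    using sum_squares_bound[of "\<bar>x\<bar>" "\<bar>y\<bar>"] by (simp add: abs_mult mult.assoc)
  then have "\<bar>x * y\<bar> \<le> x\<^sup>2 + y\<^sup>2"
    using abs_ge_zero[of "x * y"] by linarith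
  then have "\<bar>p\<bar> * \<bar>x * y\<bar> \<le> \<bar>p\<bar> * (x\<^sup>2 + y\<^sup>2)"
    by (rule mult_left_mono) simp
  then have "p * x * y \<le> \<bar>p\<bar> * (x\<^sup>2 + y\<^sup>2)"
    using abs_ge_self[of "p * x * y"] by (simp add: abs_mult mult.assoc)
  moreover have "q * y\<^sup>2 \<le> \<bar>q\<bar> * (x\<^sup>2 + y\<^sup>2)"
    by (intro mult_mono) auto
  moreover have "(1 + \<bar>p\<bar> + \<bar>q\<bar>) * (x\<^sup>2 + y\<^sup>2) =
      x\<^sup>2 + y\<^sup>2 + \<bar>p\<bar> * (x\<^sup>2 + y\<^sup>2) + \<bar>q\<bar> * (x\<^sup>2 + y\<^sup>2)"
    by (simp add: algebra_simps)
  ultimately show ?thesis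
    unfolding qform_def using zero_le_power2[of y] by linarith
qed

lemma jury_qform_decrease:
  fixes t e :: real
  assumes "\<bar>t\<bar> < 1 + e" and "e < 1"
  shows "\<exists>p q \<mu>. p\<^sup>2 < 4 * q \<and> 0 < \<mu> \<and>
           (\<forall>x y. qform p q (t * x - e * y) x = qform p q x y - \<mu> * (x\<^sup>2 + y\<^sup>2))"
proof -
  have pos: "1 + e > 0"
    using assms by linarith
  have disc: "t\<^sup>2 < (1 + e)\<^sup>2"
    using power_strict_mono[OF assms(1) abs_ge_zero, of 2] by simp
  \<comment> \<open>Lyapunov form for the companion map (x, y) \<mapsto> (t x - e y, x): p kills the cross term
    of the difference, and q is the midpoint of the interval (e^2, U) of admissible coefficients.\<close>
  define p where "p = - 2 * t * e / (1 + e)"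
  define U where "U = 1 - t\<^sup>2 * (1 - e) / (1 + e)"
  define \<mu> where "\<mu> = (U - e\<^sup>2) / 2"
  define q where "q = e\<^sup>2 + \<mu>"
  have "U - e\<^sup>2 = (1 - e) * ((1 + e)\<^sup>2 - t\<^sup>2) / (1 + e)"
    using pos unfolding U_def by (simp add: field_simps power2_eq_square)
  then have \<mu>: "\<mu> > 0"
    unfolding \<mu>_def using assms pos disc by simp
  have "p\<^sup>2 = 4 * e\<^sup>2 * (t\<^sup>2 / (1 + e)\<^sup>2)"
    unfolding p_def by (simp add: power_divide power_mult_distrib)
  also have "\<dots> \<le> 4 * e\<^sup>2 * 1"
    using disc by (intro mult_left_mono) (simp_all add: divide_le_eq_1)
  finally have "p\<^sup>2 < 4 * q"
    unfolding q_def using \<mu> by simp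
  moreover have "qform p q (t * x - e * y) x = qform p q x y - \<mu> * (x\<^sup>2 + y\<^sup>2)" for x y
  proof -
    have "p * (1 + e) + 2 * t * e = 0" and "1 - t\<^sup>2 - p * t = U"
      using pos unfolding p_def U_def by (simp_all add: field_simps power2_eq_square)
    then have coeffs: "t\<^sup>2 + p * t + q - 1 + \<mu> = 0" "p * (1 + e) + 2 * t * e = 0" "e\<^sup>2 - q + \<mu> = 0"
      unfolding q_def \<mu>_def by simp_all
    have "qform p q (t * x - e * y) x - (qform p q x y - \<mu> * (x\<^sup>2 + y\<^sup>2)) =
        (t\<^sup>2 + p * t + q - 1 + \<mu>) * x\<^sup>2 - (p * (1 + e) + 2 * t * e) * x * y + (e\<^sup>2 - q + \<mu>) * y\<^sup>2"
      unfolding qform_def by (simp add: power2_eq_square algebra_simps)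
    then show ?thesis
      unfolding coeffs by simp
  qed
  ultimately show ?thesis
    using \<mu> by blast
qed

lemma jury_recurrence_decay:
  fixes t e :: real
  assumes "\<bar>t\<bar> < 1 + e" and "e < 1"
  obtains \<rho> K where "0 \<le> \<rho>" "\<rho> < 1"
    "\<And>u n. (\<And>k. u (k + 2) = t * u (k + 1) - e * u k) \<Longrightarrow>
       (u n)\<^sup>2 \<le> K * \<rho> ^ n * ((u 0)\<^sup>2 + (u 1)\<^sup>2)"
proof -
  obtain p q \<mu> where pq: "p\<^sup>2 < 4 * q" and \<mu>: "0 < \<mu>"
    and dec: "\<And>x y. qform p q (t * x - e * y) x = qform p q x y - \<mu> * (x\<^sup>2 + y\<^sup>2)"
    using jury_qform_decrease[OF assms] by blast
  define m where "m = q - p\<^sup>2 / 4"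
  define C where "C = 1 + \<bar>p\<bar> + \<bar>q\<bar>"
  define \<rho> where "\<rho> = 1 - \<mu> / C"
  have m: "m > 0" and C: "C > 0"
    using pq unfolding m_def C_def by (simp_all add: add_pos_nonneg)
  have "\<mu> = q - e\<^sup>2" \<comment> \<open>so that \<rho> \<ge> 0\<close>
    using dec[of 0 1] by (simp add: qform_def)
  then have "\<mu> < C"
    unfolding C_def using zero_le_power2[of e] abs_ge_self[of q] abs_ge_zero[of p] by linarith
  then have \<rho>: "0 \<le> \<rho>" "\<rho> < 1"
    unfolding \<rho>_def using \<mu> C by simp_all
  have step: "qform p q (t * x - e * y) x \<le> \<rho> * qform p q x y" for x y
  proof -
    have "\<mu> / C * qform p q x y \<le> \<mu> / C * (C * (x\<^sup>2 + y\<^sup>2))"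
      using qform_le \<mu> C unfolding C_def by (intro mult_left_mono) auto
    then show ?thesis
      unfolding dec \<rho>_def using C by (simp add: algebra_simps)
  qed
  show thesis
  proof
    fix u :: "nat \<Rightarrow> real" and n
    assume rec: "\<And>k. u (k + 2) = t * u (k + 1) - e * u k"
    define E where "E k = qform p q (u (k + 1)) (u k)" for k
    have E_decay: "E k \<le> \<rho> ^ k * E 0" for k
    proof (induction k)
      case (Suc k)
      have "E (Suc k) = qform p q (t * u (k + 1) - e * u k) (u (k + 1))"
        using rec[of k] by (simp add: E_def)
      also have "\<dots> \<le> \<rho> * E k"
        unfolding E_def by (rule step)
      also have "\<dots> \<le> \<rho> * (\<rho> ^ k * E 0)"
        using Suc.IH \<rho>(1) by (rule mult_left_mono)
      finally show ?case by simp
    qed simp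
    have "E 0 \<le> C * ((u 0)\<^sup>2 + (u 1)\<^sup>2)"
      using qform_le[of p q "u 1" "u 0"] unfolding E_def C_def by (simp add: add.commute)
    have "m * (u n)\<^sup>2 \<le> E n"
      unfolding E_def m_def using qform_ge[OF pq] .
    also have "\<dots> \<le> \<rho> ^ n * E 0"
      by (rule E_decay)
    also have "\<dots> \<le> \<rho> ^ n * (C * ((u 0)\<^sup>2 + (u 1)\<^sup>2))"
      using \<open>E 0 \<le> C * ((u 0)\<^sup>2 + (u 1)\<^sup>2)\<close> \<rho>(1) by (simp add: mult_left_mono)
    finally have "m * (u n)\<^sup>2 \<le> \<rho> ^ n * (C * ((u 0)\<^sup>2 + (u 1)\<^sup>2))" .
    then show "(u n)\<^sup>2 \<le> C / m * \<rho> ^ n * ((u 0)\<^sup>2 + (u 1)\<^sup>2)"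
      using m by (simp add: field_simps)
  qed (use \<rho> in auto)
qed

lemma norm_power2_eq_sum_Basis:
  fixes x :: "'a::euclidean_space"
  shows "(norm x)\<^sup>2 = (\<Sum>b\<in>Basis. (x \<bullet> b)\<^sup>2)"
  unfolding power2_norm_eq_inner euclidean_inner[of x x] by (simp add: power2_eq_square)

lemma funpow_decay_of_quadratic_relation:
  fixes M :: "'a::euclidean_space \<Rightarrow> 'a"
  assumes "bounded_linear M"
    and rel: "\<And>w. M (M w) = t *\<^sub>R M w - e *\<^sub>R w"
    and "\<bar>t\<bar> < 1 + e" and "e < 1"
  obtains K \<sigma> where "0 \<le> K" "0 \<le> \<sigma>" "\<sigma> < 1"
    "\<And>n w. norm ((M ^^ n) w) \<le> K * \<sigma> ^ n * norm w"
proof -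
  obtain L where L: "\<And>w. norm (M w) \<le> norm w * L"
    using bounded_linear.nonneg_bounded[OF assms(1)] by blast
  obtain K \<rho> where \<rho>: "0 \<le> \<rho>" "\<rho> < 1"
    and decay: "\<And>u n. (\<And>k. u (k + 2) = t * u (k + 1) - e * u k) \<Longrightarrow>
                  (u n)\<^sup>2 \<le> K * \<rho> ^ n * ((u 0)\<^sup>2 + (u 1)\<^sup>2)"
    using jury_recurrence_decay[OF assms(3,4)] by metis
  define K' where "K' = \<bar>K\<bar> * (1 + L\<^sup>2)"
  have "0 \<le> K'"
    unfolding K'_def by simp
  have sq: "(norm ((M ^^ n) w))\<^sup>2 \<le> K' * \<rho> ^ n * (norm w)\<^sup>2" for n w
  proof -
    \<comment> \<open>every coordinate of the orbit of w solves the scalar recurrence\<close>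
    have coord: "((M ^^ n) w \<bullet> b)\<^sup>2 \<le> K * \<rho> ^ n * ((w \<bullet> b)\<^sup>2 + (M w \<bullet> b)\<^sup>2)" for b
      using decay[of "\<lambda>k. (M ^^ k) w \<bullet> b" n] by (simp add: rel inner_diff_left)
    have "(norm ((M ^^ n) w))\<^sup>2 \<le> (\<Sum>b\<in>Basis. K * \<rho> ^ n * ((w \<bullet> b)\<^sup>2 + (M w \<bullet> b)\<^sup>2))"
      unfolding norm_power2_eq_sum_Basis by (intro sum_mono coord)
    also have "\<dots> = K * \<rho> ^ n * ((norm w)\<^sup>2 + (norm (M w))\<^sup>2)"
      by (simp add: norm_power2_eq_sum_Basis sum_distrib_left sum.distrib distrib_left)
    also have "\<dots> \<le> \<bar>K\<bar> * \<rho> ^ n * ((norm w)\<^sup>2 + (norm w * L)\<^sup>2)"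
      using \<rho> L by (intro mult_mono add_left_mono power_mono) (auto simp: abs_ge_self)
    finally show ?thesis
      unfolding K'_def by (simp add: algebra_simps power_mult_distrib)
  qed
  show thesis
  proof
    fix n w
    have "norm ((M ^^ n) w) \<le> sqrt (K' * \<rho> ^ n * (norm w)\<^sup>2)"
      using sq by (rule real_le_rsqrt)
    also have "\<dots> = sqrt K' * sqrt \<rho> ^ n * norm w"
      by (simp add: real_sqrt_mult real_sqrt_power)
    finally show "norm ((M ^^ n) w) \<le> sqrt K' * sqrt \<rho> ^ n * norm w" .
  qed (use \<rho> \<open>0 \<le> K'\<close> in auto)
qed

lemma asymptotically_stable_setI:
  fixes f :: "'a::metric_space \<Rightarrow> 'a"
  assumes \<delta>: "\<delta> > 0" and c: "c \<longlonglongrightarrow> 0"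
    and bound: "\<And>z n. infdist z \<Gamma> < \<delta> \<Longrightarrow> infdist ((f ^^ n) z) \<Gamma> \<le> c n * infdist z \<Gamma>"
  shows "asymptotically_stable_set f \<Gamma>"
proof -
  obtain B where B: "B > 0" "\<And>n. \<bar>c n\<bar> \<le> B"
    using BseqD[OF convergent_imp_Bseq[OF convergentI[OF c]]] by auto
  have uniform: "infdist ((f ^^ n) z) \<Gamma> \<le> B * infdist z \<Gamma>" if "infdist z \<Gamma> < \<delta>" for z n
  proof -
    have "c n * infdist z \<Gamma> \<le> B * infdist z \<Gamma>"
      using B(2)[of n] infdist_nonneg by (intro mult_right_mono) auto
    then show ?thesis
      using bound[OF that, of n] by linarith
  qed
  have "lyapunov_stable_set f \<Gamma>"
    unfolding lyapunov_stable_set_def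
  proof (intro allI impI)
    fix \<epsilon> :: real
    assume "\<epsilon> > 0"
    have "infdist ((f ^^ n) z) \<Gamma> < \<epsilon>" if "infdist z \<Gamma> < min \<delta> (\<epsilon> / B)" for z n
    proof -
      have "infdist ((f ^^ n) z) \<Gamma> \<le> B * infdist z \<Gamma>"
        using that by (intro uniform) simp
      also have "\<dots> < B * (\<epsilon> / B)"
        using that B(1) by (intro mult_strict_left_mono) auto
      finally show ?thesis
        using B(1) by simp
    qed
    then show "\<exists>d>0. \<forall>z. infdist z \<Gamma> < d \<longrightarrow> (\<forall>n. infdist ((f ^^ n) z) \<Gamma> < \<epsilon>)"
      using \<delta> B(1) \<open>\<epsilon> > 0\<close> by (intro exI[of _ "min \<delta> (\<epsilon> / B)"]) auto
  qed
  moreover have "attracting_set f \<Gamma>"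
    unfolding attracting_set_def
  proof (intro exI[of _ \<delta>] conjI allI impI)
    fix z
    assume "infdist z \<Gamma> < \<delta>"
    have lim: "(\<lambda>n. c n * infdist z \<Gamma>) \<longlonglongrightarrow> 0"
      by (rule tendsto_mult_left_zero[OF c])
    show "(\<lambda>n. infdist ((f ^^ n) z) \<Gamma>) \<longlonglongrightarrow> 0"
    proof (rule tendsto_sandwich[OF _ _ tendsto_const lim])
      show "\<forall>\<^sub>F n in sequentially. 0 \<le> infdist ((f ^^ n) z) \<Gamma>"
        by (simp add: infdist_nonneg)
      show "\<forall>\<^sub>F n in sequentially. infdist ((f ^^ n) z) \<Gamma> \<le> c n * infdist z \<Gamma>"
        using bound[OF \<open>infdist z \<Gamma> < \<delta>\<close>] by simp
    qed
  qed (rule \<delta>)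
  ultimately show ?thesis
    unfolding asymptotically_stable_set_def ..
qed

lemma funpow_locally_affine:
  fixes g :: "'a::real_normed_vector \<Rightarrow> 'a"
  assumes near: "\<And>z. dist z P < r \<Longrightarrow> g z = P + M (z - P)"
    and bounded: "\<And>n w. norm ((M ^^ n) w) \<le> K * norm w"
    and z: "K * dist z P < r"
  shows "(g ^^ n) z = P + (M ^^ n) (z - P)"
proof (induction n)
  case (Suc n)
  have "dist (P + (M ^^ n) (z - P)) P < r"
    using bounded[of n "z - P"] z by (simp add: dist_norm)
  then show ?case
    using Suc.IH near by simp
qed simp

lemma two_cycle_iterates_near_point:
  fixes f :: "'a::real_normed_vector \<Rightarrow> 'a"
  assumes near_P: "\<And>z. dist z P < r \<Longrightarrow> f z = Q + A (z - P)"
    and near_Q: "\<And>z. dist z Q < r \<Longrightarrow> f z = P + B (z - Q)"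
    and A: "\<And>w. norm (A w) \<le> norm w * L" and L: "0 \<le> L"
    and uniform: "\<And>n w. norm (((B \<circ> A) ^^ n) w) \<le> K * norm w" and K: "0 \<le> K"
    and z: "(1 + L) * K * dist z P < r"
  shows "(f ^^ (2 * n)) z = P + ((B \<circ> A) ^^ n) (z - P)"
    and "(f ^^ Suc (2 * n)) z = Q + A (((B \<circ> A) ^^ n) (z - P))"
proof -
  define r1 where "r1 = r / (1 + L)"
  have "0 \<le> (1 + L) * K * dist z P"
    using K L by simp
  then have "r * 1 \<le> r * (1 + L)"
    using z L by (intro mult_left_mono) auto
  then have r1: "r1 \<le> r"
    unfolding r1_def using L by (simp add: pos_divide_le_eq)
  have second_iterate: "(f ^^ 2) y = P + (B \<circ> A) (y - P)" if "dist y P < r1" for y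
  proof -
    have "dist y P + L * dist y P < r"
      using that L unfolding r1_def by (simp add: pos_less_divide_eq algebra_simps)
    moreover have "0 \<le> L * dist y P"
      using L by simp
    ultimately have yr: "dist y P < r" and yLr: "L * dist y P < r"
      using zero_le_dist[of y P] by linarith+
    have "dist (f y) Q \<le> L * dist y P"
      using near_P[OF yr] A[of "y - P"] by (simp add: dist_norm mult.commute)
    then have "dist (f y) Q < r"
      using yLr by linarith
    then show ?thesis
      using near_P[OF yr] near_Q by (simp add: numeral_2_eq_2)
  qed
  have K_dist: "K * dist z P < r1"
    using z L unfolding r1_def by (simp add: pos_less_divide_eq algebra_simps)
  then show even: "(f ^^ (2 * n)) z = P + ((B \<circ> A) ^^ n) (z - P)"
    using funpow_locally_affine[where g = "f ^^ 2" and r = r1 and M = "B \<circ> A" and K = K]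
      second_iterate uniform
    by (simp add: funpow_mult)
  have "dist (P + ((B \<circ> A) ^^ n) (z - P)) P < r"
    using uniform[of n "z - P"] K_dist r1 by (simp add: dist_norm)
  then show "(f ^^ Suc (2 * n)) z = Q + A (((B \<circ> A) ^^ n) (z - P))"
    using even near_P by simp
qed

lemma two_cycle_orbit_bound:
  fixes f :: "'a::real_normed_vector \<Rightarrow> 'a"
  assumes near_P: "\<And>z. dist z P < r \<Longrightarrow> f z = Q + A (z - P)"
    and near_Q: "\<And>z. dist z Q < r \<Longrightarrow> f z = P + B (z - Q)"
    and A: "\<And>w. norm (A w) \<le> norm w * L" and L: "0 \<le> L"
    and decay: "\<And>n w. norm (((B \<circ> A) ^^ n) w) \<le> K * \<sigma> ^ n * norm w"
    and K: "0 \<le> K" and \<sigma>: "0 \<le> \<sigma>" "\<sigma> \<le> 1"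
    and z: "(1 + L) * K * dist z P < r"
  shows "infdist ((f ^^ n) z) {P, Q} \<le> (1 + L) * K * \<sigma> ^ (n div 2) * dist z P"
proof -
  have uniform: "norm (((B \<circ> A) ^^ m) w) \<le> K * norm w" for m w
  proof -
    have "K * \<sigma> ^ m \<le> K"
      using K \<sigma> by (simp add: mult_left_le power_le_one)
    then show ?thesis
      using decay[of m w] by (meson mult_right_mono norm_ge_zero order_trans)
  qed
  define k where "k = n div 2"
  define v where "v = ((B \<circ> A) ^^ k) (z - P)"
  define X where "X = K * \<sigma> ^ k * dist z P"
  have v: "norm v \<le> X"
    unfolding v_def X_def using decay by (simp add: dist_norm)
  have X: "0 \<le> X" and LX: "0 \<le> L * X"
    and bound_eq: "(1 + L) * K * \<sigma> ^ (n div 2) * dist z P = X + L * X"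
    using K \<sigma> L unfolding X_def k_def by (simp_all add: algebra_simps)
  note iterates = two_cycle_iterates_near_point[OF near_P near_Q A L uniform K z, of k]
  show ?thesis
  proof (cases "even n")
    case True
    then have "infdist ((f ^^ n) z) {P, Q} \<le> norm v"
      using infdist_le[of P "{P, Q}" "(f ^^ n) z"] iterates(1)
      unfolding k_def v_def by (simp add: dist_norm)
    then show ?thesis
      using v LX bound_eq by linarith
  next
    case False
    then have "n = Suc (2 * k)"
      unfolding k_def by simp
    then have "infdist ((f ^^ n) z) {P, Q} \<le> norm (A v)"
      using infdist_le[of Q "{P, Q}" "(f ^^ n) z"] iterates(2)
      unfolding v_def by (simp add: dist_norm)
    also have "\<dots> \<le> norm v * L"
      by (rule A)
    also have "\<dots> \<le> X * L"
      using v L by (rule mult_right_mono)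
    finally show ?thesis
      using X bound_eq by (simp add: mult.commute)
  qed
qed

lemma two_cycle_attraction_near_point:
  fixes f :: "'a::euclidean_space \<Rightarrow> 'a"
  assumes r: "r > 0"
    and near_P: "\<And>z. dist z P < r \<Longrightarrow> f z = Q + A (z - P)"
    and near_Q: "\<And>z. dist z Q < r \<Longrightarrow> f z = P + B (z - Q)"
    and A: "bounded_linear A" and B: "bounded_linear B"
    and rel: "\<And>w. B (A (B (A w))) = t *\<^sub>R B (A w) - e *\<^sub>R w"
    and jury: "\<bar>t\<bar> < 1 + e" "e < 1"
  obtains \<delta> c where "\<delta> > 0" "c \<longlonglongrightarrow> 0"
    "\<And>z n. dist z P < \<delta> \<Longrightarrow> infdist ((f ^^ n) z) {P, Q} \<le> c n * dist z P"
proof -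
  obtain L where L: "0 \<le> L" "\<And>w. norm (A w) \<le> norm w * L"
    using bounded_linear.nonneg_bounded[OF A] by blast
  have BA: "bounded_linear (B \<circ> A)"
    using bounded_linear_compose[OF B A] by (simp add: o_def)
  have rel_BA: "(B \<circ> A) ((B \<circ> A) w) = t *\<^sub>R (B \<circ> A) w - e *\<^sub>R w" for w
    using rel by simp
  obtain K \<sigma> where K: "0 \<le> K" and \<sigma>: "0 \<le> \<sigma>" "\<sigma> < 1"
    and decay: "\<And>n w. norm (((B \<circ> A) ^^ n) w) \<le> K * \<sigma> ^ n * norm w"
    using funpow_decay_of_quadratic_relation[OF BA rel_BA jury] by metis
  have den: "0 < (1 + L) * K + 1"
    using K L(1) by (simp add: add_nonneg_pos)
  show thesis
  proof
    show "r / ((1 + L) * K + 1) > 0"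
      using r den by simp
    show "(\<lambda>n. (1 + L) * K * \<sigma> ^ (n div 2)) \<longlonglongrightarrow> 0"
      using \<sigma> by (intro tendsto_mult_right_zero filterlim_compose[OF LIMSEQ_power_zero
            filterlim_at_top_div_const_nat]) auto
  next
    fix z and n :: nat
    assume "dist z P < r / ((1 + L) * K + 1)"
    then have "dist z P * ((1 + L) * K + 1) < r"
      using den by (simp add: pos_less_divide_eq)
    moreover have "(1 + L) * K * dist z P \<le> dist z P * ((1 + L) * K + 1)"
      by (simp add: algebra_simps)
    ultimately have "(1 + L) * K * dist z P < r"
      by linarith
    then show "infdist ((f ^^ n) z) {P, Q} \<le> (1 + L) * K * \<sigma> ^ (n div 2) * dist z P"
      using two_cycle_orbit_bound[OF near_P near_Q L(2,1) decay K \<sigma>(1)] \<sigma>(2) by simp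
  qed
qed

lemma infdist_doubleton: "infdist z {P, Q} = min (dist z P) (dist z Q)"
  using infdist_Un_min[of "{P}" "{Q}" z] by (simp add: infdist_singleton insert_commute)

lemma two_cycle_asymptotically_stable:
  fixes f :: "'a::euclidean_space \<Rightarrow> 'a"
  assumes r: "r > 0"
    and near_P: "\<And>z. dist z P < r \<Longrightarrow> f z = Q + A (z - P)"
    and near_Q: "\<And>z. dist z Q < r \<Longrightarrow> f z = P + B (z - Q)"
    and A: "bounded_linear A" and B: "bounded_linear B"
    and rel_BA: "\<And>w. B (A (B (A w))) = t *\<^sub>R B (A w) - e *\<^sub>R w"
    and rel_AB: "\<And>w. A (B (A (B w))) = t *\<^sub>R A (B w) - e *\<^sub>R w"
    and jury: "\<bar>t\<bar> < 1 + e" "e < 1"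
  shows "asymptotically_stable_set f {P, Q}"
proof -
  obtain \<delta>1 c1 where \<delta>1: "\<delta>1 > 0" and c1: "c1 \<longlonglongrightarrow> 0"
    and near1: "\<And>z n. dist z P < \<delta>1 \<Longrightarrow> infdist ((f ^^ n) z) {P, Q} \<le> c1 n * dist z P"
    using two_cycle_attraction_near_point[OF r near_P near_Q A B rel_BA jury] by metis
  obtain \<delta>2 c2 where \<delta>2: "\<delta>2 > 0" and c2: "c2 \<longlonglongrightarrow> 0"
    and near2: "\<And>z n. dist z Q < \<delta>2 \<Longrightarrow> infdist ((f ^^ n) z) {Q, P} \<le> c2 n * dist z Q"
    using two_cycle_attraction_near_point[OF r near_Q near_P B A rel_AB jury] by metis
  show ?thesis
  proof (rule asymptotically_stable_setI[where \<delta> = "min \<delta>1 \<delta>2" and c = "\<lambda>n. max (c1 n) (c2 n)"])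
    show "min \<delta>1 \<delta>2 > 0"
      using \<delta>1 \<delta>2 by simp
    show "(\<lambda>n. max (c1 n) (c2 n)) \<longlonglongrightarrow> 0"
      using tendsto_max[OF c1 c2] by simp
  next
    fix z n
    assume z: "infdist z {P, Q} < min \<delta>1 \<delta>2"
    show "infdist ((f ^^ n) z) {P, Q} \<le> max (c1 n) (c2 n) * infdist z {P, Q}"
    proof (cases "dist z P \<le> dist z Q")
      case True
      then have dz: "infdist z {P, Q} = dist z P"
        by (simp add: infdist_doubleton)
      then have "infdist ((f ^^ n) z) {P, Q} \<le> c1 n * dist z P"
        using z near1 by simp
      also have "\<dots> \<le> max (c1 n) (c2 n) * dist z P"
        by (simp add: mult_right_mono)
      finally show ?thesis
        unfolding dz .
    next
      case False
      then have dz: "infdist z {P, Q} = dist z Q"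
        by (simp add: infdist_doubleton)
      then have "infdist ((f ^^ n) z) {P, Q} \<le> c2 n * dist z Q"
        using z near2 by (simp add: insert_commute)
      also have "\<dots> \<le> max (c1 n) (c2 n) * dist z Q"
        by (simp add: mult_right_mono)
      finally show ?thesis
        unfolding dz .
    qed
  qed
qed

definition bcnf_linear :: "real \<Rightarrow> real \<Rightarrow> real \<times> real \<Rightarrow> real \<times> real" where
  "bcnf_linear \<tau> \<delta> w = (\<tau> * fst w + snd w, - \<delta> * fst w)"

lemma bounded_linear_bcnf_linear: "bounded_linear (bcnf_linear \<tau> \<delta>)"
proof -
  have "linear (bcnf_linear \<tau> \<delta>)"
    by (rule linearI) (auto simp: bcnf_linear_def algebra_simps)
  then show ?thesis
    by (simp add: linear_conv_bounded_linear)
qed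

lemma bcnf_linear_relation:
  assumes "t = a * c - b - d" and "e = b * d"
  shows "bcnf_linear c d (bcnf_linear a b (bcnf_linear c d (bcnf_linear a b w))) =
    t *\<^sub>R bcnf_linear c d (bcnf_linear a b w) - e *\<^sub>R w"
  unfolding assms by (cases w) (simp add: bcnf_linear_def algebra_simps)

lemma bcnf_affine_near_left:
  assumes "fst P < 0" and "dist z P < - fst P"
  shows "bcnf \<tau>L \<delta>L \<tau>R \<delta>R z = bcnf \<tau>L \<delta>L \<tau>R \<delta>R P + bcnf_linear \<tau>L \<delta>L (z - P)"
proof -
  have "fst z < 0"
    using dist_fst_le[of z P] assms unfolding dist_real_def by linarith
  then show ?thesis
    using assms(1) by (cases z, cases P) (simp add: bcnf_def bcnf_linear_def algebra_simps)
qed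

lemma bcnf_affine_near_right:
  assumes "0 < fst Q" and "dist z Q < fst Q"
  shows "bcnf \<tau>L \<delta>L \<tau>R \<delta>R z = bcnf \<tau>L \<delta>L \<tau>R \<delta>R Q + bcnf_linear \<tau>R \<delta>R (z - Q)"
proof -
  have "0 < fst z"
    using dist_fst_le[of z Q] assms unfolding dist_real_def by linarith
  then show ?thesis
    using assms(1) by (cases z, cases Q) (simp add: bcnf_def bcnf_linear_def algebra_simps)
qed

lemma Phi_region_product_bound:
  assumes "Phi_region \<tau>L \<delta>L \<tau>R \<delta>R"
  shows "\<tau>L * \<tau>R < - \<bar>(\<delta>L + 1) * (\<delta>R + 1)\<bar>"
proof -
  have L: "\<tau>L > \<bar>\<delta>L + 1\<bar>" and R: "\<tau>R < - \<bar>\<delta>R + 1\<bar>"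
    using assms unfolding Phi_region_def by auto
  have "\<bar>\<delta>L + 1\<bar> * \<bar>\<delta>R + 1\<bar> \<le> \<tau>L * \<bar>\<delta>R + 1\<bar>"
    using L by (intro mult_right_mono) simp_all
  also have "\<dots> < \<tau>L * (- \<tau>R)"
    using L R by (intro mult_strict_left_mono) auto
  finally show ?thesis
    by (simp add: abs_mult)
qed

lemma P2_region_jury_conditions:
  assumes "P2_region \<tau>L \<delta>L \<tau>R \<delta>R"
  shows "\<bar>\<tau>L * \<tau>R - \<delta>L - \<delta>R\<bar> < 1 + \<delta>L * \<delta>R" and "\<delta>L * \<delta>R < 1"
proof -
  have "\<tau>L * \<tau>R < (\<delta>L + 1) * (\<delta>R + 1)"
    using Phi_region_product_bound[of \<tau>L \<delta>L \<tau>R \<delta>R] assms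
      abs_ge_self[of "(\<delta>L + 1) * (\<delta>R + 1)"]
    unfolding P2_region_def by linarith
  moreover have "\<tau>L * \<tau>R + (\<delta>L - 1) * (\<delta>R - 1) > 0"
    using assms unfolding P2_region_def alpha_fn_def by simp
  ultimately show "\<bar>\<tau>L * \<tau>R - \<delta>L - \<delta>R\<bar> < 1 + \<delta>L * \<delta>R"
    by (simp add: abs_less_iff algebra_simps)
  show "\<delta>L * \<delta>R < 1"
    using assms unfolding P2_region_def by simp
qed

lemma bcnf_LR_cycle:
  assumes "Phi_region \<tau>L \<delta>L \<tau>R \<delta>R"
  obtains P Q where "fst P < 0" "0 < fst Q"
    "bcnf \<tau>L \<delta>L \<tau>R \<delta>R P = Q" "bcnf \<tau>L \<delta>L \<tau>R \<delta>R Q = P"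
proof -
  \<comment> \<open>Cramer's rule for (1 + \<delta>R) x2 = \<tau>L x1 + 1 and (1 + \<delta>L) x1 = \<tau>R x2 + 1\<close>
  define D where "D = (\<delta>L + 1) * (\<delta>R + 1) - \<tau>L * \<tau>R"
  define x1 where "x1 = (1 + \<delta>R + \<tau>R) / D"
  define x2 where "x2 = (1 + \<delta>L + \<tau>L) / D"
  have D: "D > 0"
    using Phi_region_product_bound[OF assms] abs_ge_self[of "(\<delta>L + 1) * (\<delta>R + 1)"]
    unfolding D_def by linarith
  have x1: "x1 < 0" and x2: "0 < x2"
    unfolding x1_def x2_def using D assms
    by (auto simp: Phi_region_def intro!: divide_neg_pos divide_pos_pos)
  have "\<tau>L * x1 + 1 = (1 + \<delta>R) * x2" and "\<tau>R * x2 + 1 = (1 + \<delta>L) * x1"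
    unfolding x1_def x2_def using D by (simp_all add: field_simps D_def)
  then show thesis
    using x1 x2 by (intro that[of "(x1, - \<delta>R * x2)" "(x2, - \<delta>L * x1)"])
      (simp_all add: bcnf_def algebra_simps)
qed

theorem proposition4p1:
  fixes tauL deltaL tauR deltaR :: real
  assumes "P2_region tauL deltaL tauR deltaR"
  shows "has_stable_LR_cycle (bcnf tauL deltaL tauR deltaR)"
proof -
  let ?f = "bcnf tauL deltaL tauR deltaR"
  let ?AL = "bcnf_linear tauL deltaL" and ?AR = "bcnf_linear tauR deltaR"
  obtain P Q where P: "fst P < 0" and Q: "0 < fst Q" and PQ: "?f P = Q" "?f Q = P"
    using bcnf_LR_cycle assms unfolding P2_region_def by metis
  define r where "r = min (- fst P) (fst Q)"
  have r: "r > 0"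
    unfolding r_def using P Q by simp
  have near_P: "?f z = Q + ?AL (z - P)" if "dist z P < r" for z
    using bcnf_affine_near_left[OF P] PQ that unfolding r_def by simp
  have near_Q: "?f z = P + ?AR (z - Q)" if "dist z Q < r" for z
    using bcnf_affine_near_right[OF Q] PQ that unfolding r_def by simp
  define t where "t = tauL * tauR - deltaL - deltaR"
  define e where "e = deltaL * deltaR"
  have rel_RL: "?AR (?AL (?AR (?AL w))) = t *\<^sub>R ?AR (?AL w) - e *\<^sub>R w"
    and rel_LR: "?AL (?AR (?AL (?AR w))) = t *\<^sub>R ?AL (?AR w) - e *\<^sub>R w" for w
    by (rule bcnf_linear_relation, simp_all add: t_def e_def)+
  have "asymptotically_stable_set ?f {P, Q}"
    using two_cycle_asymptotically_stable[OF r near_P near_Q bounded_linear_bcnf_linear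
        bounded_linear_bcnf_linear rel_RL rel_LR] P2_region_jury_conditions[OF assms]
    unfolding t_def e_def by blast
  then show ?thesis
    unfolding has_stable_LR_cycle_def using P Q PQ by blast
qed

end
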